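(* Let $X$ be a topological space. If $1\in\mathrm{MG}(X)$, then $X$ is metrizable (i.e. $\mathrm{Met}(X;\mathbb{R})\ne\emptyset$).
   Context: A linearly ordered Abelian group is an Abelian group with a linear order compatible with addition. For $x,y\in G_{>0}$, $x\asymp y$ iff $y\le nx$ and $x\le my$ for some $n,m\in\mathbb{Z}_{\ge1}$; $\mathrm{Arc}(G)=G_{>0}/\asymp$ (linearly ordered by $[x]\preceq[y]$ iff ($nx<y$ for all $n$) or $x\asymp y$), and $\mathrm{Arc}(G)^\perp$ is $\mathrm{Arc}(G)$ with a new least element adjoined. For a bottomed linearly ordered set $S$ with least element $\perp_S$, $S^*=S\setminus\{\perp_S\}$, the character $\chi(S)$ is the least cardinal $\kappa>0$ such that some strictly decreasing family $(s_\alpha)_{\alpha<\kappa}$ in $S^*$ has every $t\in S^*$ bounded below by some $s_\alpha$. A $G$-metric on $X$ is $d\colon X^2\to G$ with $d(x,y)=0\iff x=y$, $d\ge0$, symmetric, triangle inequality, topology via open balls of radii in $G_{>0}$; $\mathrm{Met}(X;G)$ is the set of $G$-metrics generating the topology of $X$. A cardinal $\kappa$ is in $\mathrm{MG}(X)$ iff some linearly ordered Abelian group $G$ with $\chi(\mathrm{Arc}(G)^\perp)=\kappa$ has $\mathrm{Met}(X;G)\ne\emptyset$. *)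

theory Defs
  imports "HOL-Analysis.Analysis"
begin

definition nsmul :: "nat \<Rightarrow> 'g::linordered_ab_group_add \<Rightarrow> 'g" where
  "nsmul n x = (\<Sum>i<n. x)"

definition arch_eq :: "'g::linordered_ab_group_add \<Rightarrow> 'g \<Rightarrow> bool" where
  "arch_eq x y \<longleftrightarrow> 0 < x \<and> 0 < y \<and>
     (\<exists>n::nat. n \<ge> 1 \<and> y \<le> nsmul n x) \<and> (\<exists>m::nat. m \<ge> 1 \<and> x \<le> nsmul m y)"

definition Arc :: "'g::linordered_ab_group_add set set" where
  "Arc = {{y. arch_eq x y} | x. 0 < x}"

definition arc_le :: "'g::linordered_ab_group_add set \<Rightarrow> 'g set \<Rightarrow> bool" where
  "arc_le A B \<longleftrightarrow> (\<exists>x\<in>A. \<exists>y\<in>B. (\<forall>n. nsmul n x < y) \<or> arch_eq x y)"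

definition Arc_bot :: "'g::linordered_ab_group_add set option set" where
  "Arc_bot = insert None (Some ` Arc)"

fun arc_bot_le :: "'g::linordered_ab_group_add set option \<Rightarrow> 'g set option \<Rightarrow> bool" where
  "arc_bot_le None _ = True"
| "arc_bot_le (Some A) None = False"
| "arc_bot_le (Some A) (Some B) = arc_le A B"

definition char_family ::
  "'a set \<Rightarrow> ('a \<Rightarrow> 'a \<Rightarrow> bool) \<Rightarrow> 'a \<Rightarrow> 'i rel \<Rightarrow> ('i \<Rightarrow> 'a) \<Rightarrow> bool" where
  "char_family S le b0 r s \<longleftrightarrow>
     well_order_on (Field r) r \<and>
     (\<forall>\<alpha>\<in>Field r. s \<alpha> \<in> S - {b0}) \<and>
     (\<forall>\<alpha>\<in>Field r. \<forall>\<beta>\<in>Field r. (\<alpha>, \<beta>) \<in> r \<and> \<alpha> \<noteq> \<beta> \<longrightarrow> le (s \<beta>) (s \<alpha>) \<and> s \<beta> \<noteq> s \<alpha>) \<and>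
     (\<forall>t\<in>S - {b0}. \<exists>\<alpha>\<in>Field r. le (s \<alpha>) t)"

text \<open>chi(S) = 1: since 1 is the least positive cardinal, this holds iff such a family
  indexed by a one-element well-order exists.\<close>
definition character_one :: "'a set \<Rightarrow> ('a \<Rightarrow> 'a \<Rightarrow> bool) \<Rightarrow> 'a \<Rightarrow> bool" where
  "character_one S le b0 \<longleftrightarrow>
     (\<exists>(r::unit rel) s. Field r \<noteq> {} \<and> char_family S le b0 r s)"

definition is_G_metric :: "'a set \<Rightarrow> ('a \<Rightarrow> 'a \<Rightarrow> 'g::linordered_ab_group_add) \<Rightarrow> bool" where
  "is_G_metric M d \<longleftrightarrow>
     (\<forall>x\<in>M. \<forall>y\<in>M. 0 \<le> d x y \<and> (d x y = 0 \<longleftrightarrow> x = y) \<and> d x y = d y x) \<and>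
     (\<forall>x\<in>M. \<forall>y\<in>M. \<forall>z\<in>M. d x z \<le> d x y + d y z)"

definition G_ball :: "'a set \<Rightarrow> ('a \<Rightarrow> 'a \<Rightarrow> 'g::linordered_ab_group_add) \<Rightarrow> 'a \<Rightarrow> 'g \<Rightarrow> 'a set" where
  "G_ball M d x \<epsilon> = {y\<in>M. d x y < \<epsilon>}"

definition in_Met :: "'a topology \<Rightarrow> ('a \<Rightarrow> 'a \<Rightarrow> 'g::linordered_ab_group_add) \<Rightarrow> bool" where
  "in_Met X d \<longleftrightarrow> is_G_metric (topspace X) d \<and>
     (\<forall>U. openin X U \<longleftrightarrow>
        U \<subseteq> topspace X \<and> (\<forall>x\<in>U. \<exists>\<epsilon>>0. G_ball (topspace X) d x \<epsilon> \<subseteq> U))"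

end

theory Submission
  imports Defs
begin

text \<open>
  If \<open>\<chi>(Arc(G)\<^sup>\<bottom>) = 1\<close>, the Archimedean classes have a least element \<open>[x\<^sub>0]\<close>:
  every \<open>y > 0\<close> satisfies \<open>x\<^sub>0 \<le> N y\<close> for some \<open>N \<ge> 1\<close>. Measure each \<open>g \<ge> 0\<close> in units
  of \<open>x\<^sub>0\<close> by the gauge \<open>\<phi>(g) = inf {p/q | q g \<le> p x\<^sub>0}\<close>, capped at 1. The gauge is
  monotone and subadditive, so \<open>\<phi> \<circ> d\<close> satisfies the triangle inequality. From
  \<open>x\<^sub>0 \<le> N g\<close> one gets \<open>\<phi>(g) \<ge> 1/N\<close>, so \<open>\<phi>(g) = 0\<close> only for \<open>g = 0\<close>, and a small
  gauge forces \<open>g\<close> below any given positive element. Conversely the gauge of small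
  elements is small: either \<open>G\<close> has a least positive element, or positive elements
  can be halved \<open>k\<close> times below \<open>x\<^sub>0\<close>, giving gauge at most \<open>2\<^sup>-\<^sup>k\<close>. Hence the real
  metric \<open>\<phi> \<circ> d\<close> has the same balls as \<open>d\<close> up to a change of radius.
\<close>

lemma nsmul_0 [simp]: "nsmul 0 x = 0"
  by (simp add: nsmul_def)

lemma nsmul_Suc: "nsmul (Suc n) x = x + nsmul n x"
  by (simp add: nsmul_def)

lemma nsmul_1 [simp]: "nsmul (Suc 0) x = x"
  by (simp add: nsmul_def)

lemma nsmul_add: "nsmul (m + n) x = nsmul m x + nsmul n x"
  by (induction m) (simp_all add: nsmul_Suc add.assoc)

lemma nsmul_add_distrib: "nsmul n (x + y) = nsmul n x + nsmul n y"
  by (simp add: nsmul_def sum.distrib)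

lemma nsmul_mult: "nsmul (m * n) x = nsmul m (nsmul n x)"
  by (induction m) (simp_all add: nsmul_Suc nsmul_add)

lemma nsmul_mono: "x \<le> y \<Longrightarrow> nsmul n x \<le> nsmul n y"
  by (simp add: nsmul_def sum_mono)

lemma nsmul_less_cancel: "nsmul n x < nsmul n y \<Longrightarrow> x < y"
  using nsmul_mono[of y x n] by (meson not_le)

lemma nsmul_nonneg: "0 \<le> x \<Longrightarrow> 0 \<le> nsmul n x"
  using nsmul_mono[of 0 x n] by (simp add: nsmul_def)

lemma nsmul_strict_increasing:
  assumes "0 < x" and "m < n"
  shows "nsmul m x < nsmul n x"
proof -
  obtain k where "n = Suc m + k"
    using \<open>m < n\<close> less_imp_Suc_add by blast
  then show ?thesis
    using assms(1) nsmul_nonneg[of x k] by (simp add: nsmul_add nsmul_Suc add_pos_nonneg)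
qed

definition arch_below :: "'g::linordered_ab_group_add \<Rightarrow> 'g \<Rightarrow> bool" where
  "arch_below x y \<longleftrightarrow> (\<exists>n\<ge>1. x \<le> nsmul n y)"

lemma arch_below_trans:
  assumes "arch_below x y" and "arch_below y z"
  shows "arch_below x z"
proof -
  obtain m n where "m \<ge> 1" "x \<le> nsmul m y" "n \<ge> 1" "y \<le> nsmul n z"
    using assms unfolding arch_below_def by blast
  then have "x \<le> nsmul (m * n) z"
    by (metis nsmul_mono nsmul_mult order_trans)
  with \<open>m \<ge> 1\<close> \<open>n \<ge> 1\<close> show ?thesis
    unfolding arch_below_def by (intro exI[of _ "m * n"]) simp
qed

lemma arch_eq_imp_arch_below: "arch_eq x y \<Longrightarrow> arch_below x y \<and> arch_below y x"
  by (auto simp: arch_eq_def arch_below_def)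

lemma arc_le_imp_arch_below:
  assumes "arc_le {z. arch_eq x z} {z. arch_eq y z}"
  shows "arch_below x y"
proof -
  obtain x' y' where "arch_eq x x'" "arch_eq y y'" and "(\<forall>n. nsmul n x' < y') \<or> arch_eq x' y'"
    using assms unfolding arc_le_def by auto
  moreover have "arch_below x' y'" if "\<forall>n. nsmul n x' < y'"
    using that[rule_format, of "Suc 0"] unfolding arch_below_def by (intro exI[of _ "Suc 0"]) simp
  ultimately have "arch_below x x'" and "arch_below x' y'" and "arch_below y' y"
    using arch_eq_imp_arch_below by blast+
  then show ?thesis
    by (blast intro: arch_below_trans)
qed

lemma character_one_imp_least_class:
  assumes "character_one (Arc_bot :: 'g set option set) arc_bot_le None"
  obtains x0 :: "'g::linordered_ab_group_add" where "0 < x0" and "\<And>y. 0 < y \<Longrightarrow> arch_below x0 y"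
proof -
  obtain r :: "unit rel" and s where "Field r \<noteq> {}"
    and s_in: "\<forall>\<alpha>\<in>Field r. s \<alpha> \<in> Arc_bot - {None}"
    and s_below: "\<forall>t\<in>(Arc_bot :: 'g set option set) - {None}. \<exists>\<alpha>\<in>Field r. arc_bot_le (s \<alpha>) t"
    using assms unfolding character_one_def char_family_def by (elim exE conjE) (rule that)
  then have "() \<in> Field r"
    by auto
  with s_in obtain x0 where "0 < x0" and s_unit: "s () = Some {z. arch_eq x0 z}"
    unfolding Arc_bot_def Arc_def by auto
  moreover have "arch_below x0 y" if "0 < y" for y
  proof -
    have "Some {z. arch_eq y z} \<in> Arc_bot - {None}"
      using \<open>0 < y\<close> unfolding Arc_bot_def Arc_def by auto
    with s_below obtain \<alpha> where "arc_bot_le (s \<alpha>) (Some {z. arch_eq y z})"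
      by blast
    then show ?thesis
      using s_unit arc_le_imp_arch_below by (cases \<alpha>) simp
  qed
  ultimately show ?thesis
    using that by blast
qed

text \<open>The cap 1 keeps the set nonempty when no multiple of \<open>x\<^sub>0\<close> dominates \<open>g\<close>.\<close>

definition gauge_bounds :: "'g::linordered_ab_group_add \<Rightarrow> 'g \<Rightarrow> real set" where
  "gauge_bounds x0 g = insert 1 {real p / real q | p q. q \<ge> 1 \<and> nsmul q g \<le> nsmul p x0}"

definition gauge :: "'g::linordered_ab_group_add \<Rightarrow> 'g \<Rightarrow> real" where
  "gauge x0 g = Inf (gauge_bounds x0 g)"

lemma gauge_bounds_nonempty: "gauge_bounds x0 g \<noteq> {}"
  by (simp add: gauge_bounds_def)

lemma gauge_bounds_nonneg: "a \<in> gauge_bounds x0 g \<Longrightarrow> 0 \<le> a"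
  by (auto simp: gauge_bounds_def)

lemma bdd_below_gauge_bounds: "bdd_below (gauge_bounds x0 g)"
  using gauge_bounds_nonneg by (meson bdd_below.I)

lemma gauge_nonneg: "0 \<le> gauge x0 g"
  unfolding gauge_def by (rule cInf_greatest[OF gauge_bounds_nonempty]) (rule gauge_bounds_nonneg)

lemma gauge_le: "a \<in> gauge_bounds x0 g \<Longrightarrow> gauge x0 g \<le> a"
  unfolding gauge_def by (rule cInf_lower[OF _ bdd_below_gauge_bounds])

lemma gauge_le_one: "gauge x0 g \<le> 1"
  by (rule gauge_le) (simp add: gauge_bounds_def)

lemma gauge_le_divide: "q \<ge> 1 \<Longrightarrow> nsmul q g \<le> nsmul p x0 \<Longrightarrow> gauge x0 g \<le> real p / real q"
  by (rule gauge_le) (auto simp: gauge_bounds_def)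

lemma gauge_zero [simp]: "gauge x0 0 = 0"
  using gauge_le_divide[of 1 0 0 x0] gauge_nonneg[of x0 0] by simp

lemma gauge_mono: "g \<le> h \<Longrightarrow> gauge x0 g \<le> gauge x0 h"
  unfolding gauge_def
proof (rule cInf_superset_mono[OF gauge_bounds_nonempty bdd_below_gauge_bounds])
  assume "g \<le> h"
  then show "gauge_bounds x0 h \<subseteq> gauge_bounds x0 g"
    unfolding gauge_bounds_def using nsmul_mono order_trans by blast
qed

lemma gauge_add_le_bounds:
  assumes a: "a \<in> gauge_bounds x0 g" and b: "b \<in> gauge_bounds x0 h"
  shows "gauge x0 (g + h) \<le> a + b"
proof (cases "a = 1 \<or> b = 1")
  case True
  then show ?thesis
    using gauge_le_one gauge_bounds_nonneg[OF a] gauge_bounds_nonneg[OF b] by (smt (verit))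
next
  case False
  then obtain p1 q1 p2 q2
    where a_eq: "a = real p1 / real q1" and "q1 \<ge> 1" and g_le: "nsmul q1 g \<le> nsmul p1 x0"
      and b_eq: "b = real p2 / real q2" and "q2 \<ge> 1" and h_le: "nsmul q2 h \<le> nsmul p2 x0"
    using a b unfolding gauge_bounds_def by auto
  have "nsmul (q1 * q2) (g + h) = nsmul q2 (nsmul q1 g) + nsmul q1 (nsmul q2 h)"
    by (simp add: nsmul_add_distrib nsmul_mult[symmetric] mult.commute)
  also have "\<dots> \<le> nsmul q2 (nsmul p1 x0) + nsmul q1 (nsmul p2 x0)"
    by (intro add_mono nsmul_mono g_le h_le)
  also have "\<dots> = nsmul (q2 * p1) x0 + nsmul (q1 * p2) x0"
    by (simp add: nsmul_mult)
  also have "\<dots> = nsmul (p1 * q2 + p2 * q1) x0"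
    by (simp add: nsmul_add mult.commute)
  finally have "gauge x0 (g + h) \<le> real (p1 * q2 + p2 * q1) / real (q1 * q2)"
    using \<open>q1 \<ge> 1\<close> \<open>q2 \<ge> 1\<close> by (intro gauge_le_divide) (auto simp: one_le_mult_iff)
  also have "\<dots> = a + b"
    using a_eq b_eq \<open>q1 \<ge> 1\<close> \<open>q2 \<ge> 1\<close> by (simp add: field_simps)
  finally show ?thesis .
qed

lemma gauge_add: "gauge x0 (g + h) \<le> gauge x0 g + gauge x0 h"
proof -
  have "gauge x0 (g + h) - gauge x0 g \<le> b" if "b \<in> gauge_bounds x0 h" for b
  proof -
    have "gauge x0 (g + h) - b \<le> gauge x0 g"
      unfolding gauge_def[of x0 g] using gauge_add_le_bounds[OF _ that]
      by (intro cInf_greatest[OF gauge_bounds_nonempty]) force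
    then show ?thesis
      by linarith
  qed
  then have "gauge x0 (g + h) - gauge x0 g \<le> gauge x0 h"
    unfolding gauge_def[of x0 h] by (rule cInf_greatest[OF gauge_bounds_nonempty])
  then show ?thesis
    by simp
qed

lemma gauge_ge_inverse:
  assumes "0 < g" and "N \<ge> 1" and "x0 \<le> nsmul N g"
  shows "1 / real N \<le> gauge x0 g"
  unfolding gauge_def
proof (rule cInf_greatest[OF gauge_bounds_nonempty])
  fix a
  assume "a \<in> gauge_bounds x0 g"
  then consider "a = 1"
    | p q where "a = real p / real q" "q \<ge> 1" "nsmul q g \<le> nsmul p x0"
    unfolding gauge_bounds_def by auto
  then show "1 / real N \<le> a"
  proof cases
    case 1
    then show ?thesis
      using \<open>N \<ge> 1\<close> by simp
  next
    case (2 p q)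
    have "nsmul q g \<le> nsmul (p * N) g"
      using \<open>nsmul q g \<le> nsmul p x0\<close> nsmul_mono[OF \<open>x0 \<le> nsmul N g\<close>, of p]
      by (simp add: nsmul_mult)
    then have "q \<le> p * N"
      using nsmul_strict_increasing[OF \<open>0 < g\<close>, of "p * N" q] by (meson not_le)
    then have "real q \<le> real p * real N"
      by (metis of_nat_le_iff of_nat_mult)
    moreover have "0 < real q" and "0 < real N"
      using \<open>q \<ge> 1\<close> \<open>N \<ge> 1\<close> by auto
    ultimately have "1 / real N \<le> real p / real q"
      by (simp add: field_simps)
    with \<open>a = real p / real q\<close> show ?thesis
      by simp
  qed
qed

lemma gauge_less_inverse_imp_less:
  assumes "0 < e" and "N \<ge> 1" and "x0 \<le> nsmul N e"
    and "gauge x0 g < 1 / real N"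
  shows "g < e"
proof -
  obtain a where a: "a \<in> gauge_bounds x0 g" "a < 1 / real N"
    using cInf_lessD[OF gauge_bounds_nonempty] assms(4) unfolding gauge_def by blast
  then have "a \<noteq> 1"
    using \<open>N \<ge> 1\<close> by (auto simp: field_simps)
  with a obtain p q where "a = real p / real q" "q \<ge> 1" and g_le: "nsmul q g \<le> nsmul p x0"
    unfolding gauge_bounds_def by auto
  with a \<open>N \<ge> 1\<close> have "real (p * N) < real q"
    by (simp add: field_simps)
  then have "p * N < q"
    by (simp only: of_nat_less_iff)
  have "nsmul q g \<le> nsmul (p * N) e"
    using g_le nsmul_mono[OF \<open>x0 \<le> nsmul N e\<close>, of p] by (simp add: nsmul_mult)
  also have "\<dots> < nsmul q e"
    by (rule nsmul_strict_increasing[OF \<open>0 < e\<close> \<open>p * N < q\<close>])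
  finally show ?thesis
    by (rule nsmul_less_cancel)
qed

lemma exists_pos_double_le:
  fixes e :: "'g::linordered_ab_group_add"
  assumes "0 < f" and "f < e"
  obtains h where "0 < h" and "h + h \<le> e"
proof (cases "f + f \<le> e")
  case True
  with \<open>0 < f\<close> show ?thesis
    by (rule that)
next
  case False
  with assms have "0 < e - f" and "(e - f) + (e - f) \<le> e"
    by (auto simp: algebra_simps)
  then show ?thesis
    by (rule that)
qed

lemma exists_pos_nsmul_power2_le:
  fixes x0 :: "'g::linordered_ab_group_add"
  assumes no_least: "\<And>e :: 'g. 0 < e \<Longrightarrow> \<exists>f>0. f < e" and "0 < x0"
  shows "\<exists>f>0. nsmul (2 ^ k) f \<le> x0"
proof (induction k)
  case 0
  show ?case
    using \<open>0 < x0\<close> by auto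
next
  case (Suc k)
  then obtain e where "0 < e" and e_le: "nsmul (2 ^ k) e \<le> x0"
    by blast
  obtain f where "0 < f" "f < e"
    using no_least[OF \<open>0 < e\<close>] by blast
  then obtain h where "0 < h" and "h + h \<le> e"
    by (rule exists_pos_double_le)
  have "nsmul (2 ^ Suc k) h = nsmul (2 ^ k) (h + h)"
    by (simp only: power_Suc2 nsmul_mult) (simp add: numeral_2_eq_2 nsmul_Suc)
  also have "\<dots> \<le> nsmul (2 ^ k) e"
    by (rule nsmul_mono[OF \<open>h + h \<le> e\<close>])
  finally show ?case
    using e_le \<open>0 < h\<close> order_trans by blast
qed

lemma gauge_small_near_zero:
  fixes x0 :: "'g::linordered_ab_group_add"
  assumes "0 < x0" and "0 < r"
  obtains e where "0 < e" and "\<And>g. 0 \<le> g \<Longrightarrow> g < e \<Longrightarrow> gauge x0 g < r"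
proof (cases "\<exists>m>0. \<forall>g>(0::'g). m \<le> g")
  case True
  then obtain m :: 'g where "0 < m" and least: "\<forall>g>0. m \<le> g"
    by blast
  have "gauge x0 g < r" if "0 \<le> g" "g < m" for g
  proof -
    from that least have "g = 0"
      by (metis not_le order_le_less)
    with \<open>0 < r\<close> show ?thesis
      by simp
  qed
  with \<open>0 < m\<close> show ?thesis
    by (rule that)
next
  case False
  then have no_least: "\<exists>f>0. f < e" if "0 < e" for e :: 'g
    using that by (auto simp: not_le)
  obtain k where k: "(1 / 2 :: real) ^ k < r"
    using real_arch_pow_inv[OF \<open>0 < r\<close>, of "1 / 2"] by auto
  obtain f where "0 < f" and f_le: "nsmul (2 ^ k) f \<le> x0"
    using exists_pos_nsmul_power2_le[OF no_least \<open>0 < x0\<close>] by blast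
  have "gauge x0 f \<le> real 1 / real (2 ^ k)"
    using f_le by (intro gauge_le_divide) auto
  with k have "gauge x0 f < r"
    by (simp add: power_divide)
  with gauge_mono[of _ f x0] have "gauge x0 g < r" if "g < f" for g
    using that by (meson less_imp_le order_le_less_trans)
  with \<open>0 < f\<close> show ?thesis
    by (rule that)
qed

definition gauge_metric ::
  "'g::linordered_ab_group_add \<Rightarrow> 'a set \<Rightarrow> ('a \<Rightarrow> 'a \<Rightarrow> 'g) \<Rightarrow> 'a \<Rightarrow> 'a \<Rightarrow> real" where
  "gauge_metric x0 M d x y = (if x \<in> M \<and> y \<in> M then gauge x0 (d x y) else 0)"

lemma Metric_space_gauge_metric:
  assumes d: "is_G_metric M d" and least: "\<And>y. 0 < y \<Longrightarrow> arch_below x0 y"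
  shows "Metric_space M (gauge_metric x0 M d)"
proof
  fix x y
  show "0 \<le> gauge_metric x0 M d x y"
    by (simp add: gauge_metric_def gauge_nonneg)
  show "gauge_metric x0 M d x y = gauge_metric x0 M d y x"
    using d by (auto simp: gauge_metric_def is_G_metric_def)
next
  fix x y
  assume "x \<in> M" "y \<in> M"
  with d have "0 \<le> d x y" and d_zero: "d x y = 0 \<longleftrightarrow> x = y"
    unfolding is_G_metric_def by auto
  have "gauge x0 (d x y) \<noteq> 0" if "x \<noteq> y"
  proof -
    from that d_zero \<open>0 \<le> d x y\<close> have "0 < d x y"
      by simp
    with least obtain N where "N \<ge> 1" "x0 \<le> nsmul N (d x y)"
      unfolding arch_below_def by blast
    with \<open>0 < d x y\<close> have "1 / real N \<le> gauge x0 (d x y)"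
      by (rule gauge_ge_inverse)
    moreover have "0 < 1 / real N"
      using \<open>N \<ge> 1\<close> by simp
    ultimately show ?thesis
      by linarith
  qed
  with d_zero \<open>x \<in> M\<close> \<open>y \<in> M\<close> show "gauge_metric x0 M d x y = 0 \<longleftrightarrow> x = y"
    by (auto simp: gauge_metric_def)
next
  fix x y z
  assume "x \<in> M" "y \<in> M" "z \<in> M"
  with d have "gauge x0 (d x z) \<le> gauge x0 (d x y + d y z)"
    unfolding is_G_metric_def by (intro gauge_mono) blast
  also have "\<dots> \<le> gauge x0 (d x y) + gauge x0 (d y z)"
    by (rule gauge_add)
  finally show "gauge_metric x0 M d x z \<le> gauge_metric x0 M d x y + gauge_metric x0 M d y z"
    using \<open>x \<in> M\<close> \<open>y \<in> M\<close> \<open>z \<in> M\<close> by (simp add: gauge_metric_def)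
qed

lemma (in Metric_space) in_Met_eq_mtopology:
  assumes "in_Met X d'" and "M = topspace X"
    and mball_in_G_ball: "\<And>x e. x \<in> M \<Longrightarrow> 0 < e \<Longrightarrow> \<exists>r>0. mball x r \<subseteq> G_ball M d' x e"
    and G_ball_in_mball: "\<And>x r. x \<in> M \<Longrightarrow> 0 < r \<Longrightarrow> \<exists>e>0. G_ball M d' x e \<subseteq> mball x r"
  shows "X = mtopology"
proof -
  have balls_iff: "(\<exists>e>0. G_ball M d' x e \<subseteq> U) \<longleftrightarrow> (\<exists>r>0. mball x r \<subseteq> U)"
    if "x \<in> M" for x U
  proof
    assume "\<exists>e>0. G_ball M d' x e \<subseteq> U"
    then obtain e where "0 < e" "G_ball M d' x e \<subseteq> U"
      by blast
    with mball_in_G_ball[OF that] show "\<exists>r>0. mball x r \<subseteq> U"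
      by (meson subset_trans)
  next
    assume "\<exists>r>0. mball x r \<subseteq> U"
    then obtain r where "0 < r" "mball x r \<subseteq> U"
      by blast
    with G_ball_in_mball[OF that] show "\<exists>e>0. G_ball M d' x e \<subseteq> U"
      by (meson subset_trans)
  qed
  have "openin X U \<longleftrightarrow> openin mtopology U" for U
  proof -
    have "openin X U \<longleftrightarrow> U \<subseteq> M \<and> (\<forall>x\<in>U. \<exists>e>0. G_ball M d' x e \<subseteq> U)"
      using assms(1,2) unfolding in_Met_def by simp
    also have "\<dots> \<longleftrightarrow> U \<subseteq> M \<and> (\<forall>x. x \<in> U \<longrightarrow> (\<exists>r>0. mball x r \<subseteq> U))"
      using balls_iff by (meson subsetD)
    also have "\<dots> \<longleftrightarrow> openin mtopology U"
      by (rule openin_mtopology[symmetric])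
    finally show ?thesis .
  qed
  then show ?thesis
    by (simp add: topology_eq)
qed

lemma mtopology_gauge_metric:
  fixes x0 :: "'g::linordered_ab_group_add"
  assumes d: "in_Met X d" and "0 < x0" and least: "\<And>y. 0 < y \<Longrightarrow> arch_below x0 y"
  shows "Metric_space.mtopology (topspace X) (gauge_metric x0 (topspace X) d) = X"
proof -
  let ?M = "topspace X"
  have G_metric: "is_G_metric ?M d"
    using d unfolding in_Met_def by blast
  interpret Metric_space ?M "gauge_metric x0 ?M d"
    using Metric_space_gauge_metric[OF G_metric least] .
  have d_nonneg: "0 \<le> d x y" if "x \<in> ?M" "y \<in> ?M" for x y
    using G_metric that unfolding is_G_metric_def by blast
  have mball_eq: "mball x r = {y \<in> ?M. gauge x0 (d x y) < r}" if "x \<in> ?M" for x r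
    using that by (auto simp: gauge_metric_def)
  have "X = mtopology"
  proof (rule in_Met_eq_mtopology[OF d refl])
    fix x and e :: 'g
    assume "x \<in> ?M" "0 < e"
    with least obtain N where "N \<ge> 1" "x0 \<le> nsmul N e"
      unfolding arch_below_def by blast
    with \<open>0 < e\<close> have "mball x (1 / real N) \<subseteq> G_ball ?M d x e"
      using gauge_less_inverse_imp_less by (auto simp: mball_eq[OF \<open>x \<in> ?M\<close>] G_ball_def)
    moreover have "0 < 1 / real N"
      using \<open>N \<ge> 1\<close> by simp
    ultimately show "\<exists>r>0. mball x r \<subseteq> G_ball ?M d x e"
      by blast
  next
    fix x and r :: real
    assume "x \<in> ?M" "0 < r"
    obtain e where "0 < e" and "\<And>g. 0 \<le> g \<Longrightarrow> g < e \<Longrightarrow> gauge x0 g < r"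
      using gauge_small_near_zero[OF \<open>0 < x0\<close> \<open>0 < r\<close>] by blast
    then have "G_ball ?M d x e \<subseteq> mball x r"
      using d_nonneg \<open>x \<in> ?M\<close> by (auto simp: mball_eq[OF \<open>x \<in> ?M\<close>] G_ball_def)
    with \<open>0 < e\<close> show "\<exists>e>0. G_ball ?M d x e \<subseteq> mball x r"
      by blast
  qed
  then show ?thesis
    by simp
qed

theorem proposition2p45:
  fixes X :: "'a topology"
    and d :: "'a \<Rightarrow> 'a \<Rightarrow> 'g::linordered_ab_group_add"
  assumes "character_one (Arc_bot :: 'g set option set) arc_bot_le None"
    and "in_Met X d"
  shows "metrizable_space X"
proof -
  obtain x0 :: 'g where "0 < x0" and least: "\<And>y. 0 < y \<Longrightarrow> arch_below x0 y"
    using character_one_imp_least_class[OF assms(1)] by blast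
  have "Metric_space (topspace X) (gauge_metric x0 (topspace X) d)"
    using assms(2) least by (intro Metric_space_gauge_metric) (auto simp: in_Met_def)
  moreover have "X = Metric_space.mtopology (topspace X) (gauge_metric x0 (topspace X) d)"
    using mtopology_gauge_metric[OF assms(2) \<open>0 < x0\<close> least] by simp
  ultimately show ?thesis
    unfolding metrizable_space_def by blast
qed

end
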